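(* There exists an absolute constant $C_1>0$ such that for every $\delta_0>0$ the following holds: if $\|\mathcal T-\mathcal S\|_{\mathrm{op}}<\delta_0$ and $x\in\mathbb C^n$ satisfies $\|\nabla g(x^+)\|\ge C_1\delta_0 c\,(\|x\|+\|x^\natural\|)^3$, then $\nabla f(x^+)\neq0$.
   Context: Let $n,m\ge 1$, $a_1,\dots,a_m\in\mathbb C^n$ and $x^\natural\in\mathbb C^n$ with $x^\natural\neq0$. For $a,b\in\mathbb C^n$ write $\langle a,b\rangle=\sum_{j}a_j\overline{b_j}$ and let $\|\cdot\|$ be the Euclidean norm. Let $y_i=|\langle a_i,x^\natural\rangle|^2$. For $v\in\mathbb C^n$ put $v^+=(\mathrm{Re}\,v,\mathrm{Im}\,v)\in\mathbb R^{2n}$ and $v^-=(-\mathrm{Im}\,v,\mathrm{Re}\,v)$; $x$ and $x^+$ always correspond. Define $f:\mathbb R^{2n}\to\mathbb R$ by $f(x^+)=\sum_{i=1}^m\big(|\langle a_i,x\rangle|^2-y_i\big)^2$. Fix $\sigma>0$ (in the paper, $\sigma^2=\mathrm{Var}((a_i^+)_1)$ for random measurement vectors), set $c=m\sigma^4$, and define $g:\mathbb R^{2n}\to\mathbb R$ by $g(x^+)=8c\left(\|x\|^4+\|x^\natural\|^4-|\langle x,x^\natural\rangle|^2-\|x\|^2\|x^\natural\|^2\right)$. Gradients are with respect to $x^+\in\mathbb R^{2n}$. Define the order-4 tensors on $\mathbb R^{2n}$: $\mathcal T=\frac1c\sum_{i=1}^m(a_i^+)^{\otimes 4}$ and $\mathcal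 S_{i_1i_2i_3i_4}=\mathbf 1_{i_1=i_2,\,i_3=i_4}+\mathbf 1_{i_1=i_3,\,i_2=i_4}+\mathbf 1_{i_1=i_4,\,i_2=i_3}$, and $\|\mathcal R\|_{\mathrm{op}}=\sup\{\langle \mathcal R,u_1\otimes u_2\otimes u_3\otimes u_4\rangle:\ u_j\in\mathbb R^{2n},\ \|u_1\|\|u_2\|\|u_3\|\|u_4\|=1\}$ (tensor inner product = sum of entrywise products). *)

theory Defs
  imports "HOL-Analysis.Analysis"
begin

text \<open>Vectors in C^n are represented as functions nat => complex, only indices j < n
  being relevant; vectors in R^(2n) as functions nat => real with indices k < 2n.
  The dimension n is an explicit natural number so that the absolute constant can be
  quantified before n.\<close>

definition cinner :: "nat \<Rightarrow> (nat \<Rightarrow> complex) \<Rightarrow> (nat \<Rightarrow> complex) \<Rightarrow> complex" where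
  "cinner n a b = (\<Sum>j<n. a j * cnj (b j))"

definition cnorm :: "nat \<Rightarrow> (nat \<Rightarrow> complex) \<Rightarrow> real" where
  "cnorm n x = sqrt (\<Sum>j<n. (cmod (x j))\<^sup>2)"

definition vplus :: "nat \<Rightarrow> (nat \<Rightarrow> complex) \<Rightarrow> nat \<Rightarrow> real" where
  "vplus n v k = (if k < n then Re (v k) else Im (v (k - n)))"

definition ofplus :: "nat \<Rightarrow> (nat \<Rightarrow> real) \<Rightarrow> nat \<Rightarrow> complex" where
  "ofplus n u j = Complex (u j) (u (n + j))"

definition rnorm :: "nat \<Rightarrow> (nat \<Rightarrow> real) \<Rightarrow> real" where
  "rnorm N u = sqrt (\<Sum>k<N. (u k)\<^sup>2)"

definition grad :: "((nat \<Rightarrow> real) \<Rightarrow> real) \<Rightarrow> (nat \<Rightarrow> real) \<Rightarrow> nat \<Rightarrow> real" where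
  "grad F u k = deriv (\<lambda>t. F (u(k := t))) (u k)"

definition f_obj :: "nat \<Rightarrow> nat \<Rightarrow> (nat \<Rightarrow> nat \<Rightarrow> complex) \<Rightarrow> (nat \<Rightarrow> complex) \<Rightarrow> (nat \<Rightarrow> real) \<Rightarrow> real" where
  "f_obj n m a xn u = (\<Sum>i<m. ((cmod (cinner n (a i) (ofplus n u)))\<^sup>2 - (cmod (cinner n (a i) xn))\<^sup>2)\<^sup>2)"

definition g_obj :: "nat \<Rightarrow> real \<Rightarrow> (nat \<Rightarrow> complex) \<Rightarrow> (nat \<Rightarrow> real) \<Rightarrow> real" where
  "g_obj n c xn u = 8 * c * ((cnorm n (ofplus n u))^4 + (cnorm n xn)^4
      - (cmod (cinner n (ofplus n u) xn))\<^sup>2 - (cnorm n (ofplus n u))\<^sup>2 * (cnorm n xn)\<^sup>2)"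

type_synonym tensor4 = "nat \<Rightarrow> nat \<Rightarrow> nat \<Rightarrow> nat \<Rightarrow> real"

definition tensT :: "nat \<Rightarrow> nat \<Rightarrow> real \<Rightarrow> (nat \<Rightarrow> nat \<Rightarrow> complex) \<Rightarrow> tensor4" where
  "tensT n m c a i1 i2 i3 i4 =
     (1 / c) * (\<Sum>i<m. vplus n (a i) i1 * vplus n (a i) i2 * vplus n (a i) i3 * vplus n (a i) i4)"

definition tensS :: tensor4 where
  "tensS i1 i2 i3 i4 = (if i1 = i2 \<and> i3 = i4 then 1 else 0) + (if i1 = i3 \<and> i2 = i4 then 1 else 0)
                      + (if i1 = i4 \<and> i2 = i3 then 1 else 0)"

definition tens_apply :: "nat \<Rightarrow> tensor4 \<Rightarrow> (nat \<Rightarrow> real) \<Rightarrow> (nat \<Rightarrow> real) \<Rightarrow> (nat \<Rightarrow> real) \<Rightarrow> (nat \<Rightarrow> real) \<Rightarrow> real" where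
  "tens_apply N R u1 u2 u3 u4 =
     (\<Sum>i1<N. \<Sum>i2<N. \<Sum>i3<N. \<Sum>i4<N. R i1 i2 i3 i4 * u1 i1 * u2 i2 * u3 i3 * u4 i4)"

definition tens_opnorm :: "nat \<Rightarrow> tensor4 \<Rightarrow> real" where
  "tens_opnorm N R = Sup {tens_apply N R u1 u2 u3 u4 | u1 u2 u3 u4.
      rnorm N u1 * rnorm N u2 * rnorm N u3 * rnorm N u4 = 1}"

end

(* Write u = x^+, v = x_nat^+ and J for multiplication by i in real coordinates.  Both
   gradients pair with a direction z through one and the same expression in a fourth-order
   tensor: <grad f(u), z> = 4c E(T) and <grad g(u), z> = 4c E(S), where E(R) evaluates
   R(u,u,.,.) + R(Ju,Ju,.,.) - R(v,v,.,.) - R(Jv,Jv,.,.), the real form of x x^* - x_nat x_nat^*,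
   at (u, z) and at (Ju, Jz).  E is linear in R and each of its eight terms is bounded by the
   operator norm, and J is an isometry, so |grad f(u) - grad g(u)| <= 16 c |T - S|_op (|x| + |x_nat|)^3.
   At a critical point of f this bounds |grad g(u)| by 16 c delta0 (|x| + |x_nat|)^3, whence C1 = 17. *)

theory Submission
  imports Defs
begin

definition rinner :: "nat \<Rightarrow> (nat \<Rightarrow> real) \<Rightarrow> (nat \<Rightarrow> real) \<Rightarrow> real" where
  "rinner N a b = (\<Sum>k<N. a k * b k)"

text \<open>\<^term>\<open>imul n (vplus n v)\<close> is \<^term>\<open>vplus n (\<lambda>j. \<i> * v j)\<close>, the paper's \<open>v\<^sup>-\<close>.\<close>

definition imul :: "nat \<Rightarrow> (nat \<Rightarrow> real) \<Rightarrow> nat \<Rightarrow> real" where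
  "imul n u k = (if k < n then - u (n + k) else u (k - n))"

lemma sum_lessThan_double:
  "(\<Sum>k<2 * n. h k) = (\<Sum>j<n. h j) + (\<Sum>j<n. h (n + j :: nat))"
proof -
  have "(\<Sum>k<2 * n. h k) = sum h {0..<n} + sum h {n..<n + n}"
    by (simp add: mult_2 lessThan_atLeast0 sum.atLeastLessThan_concat)
  then show ?thesis
    using sum.shift_bounds_nat_ivl[of h 0 n n] by (simp add: lessThan_atLeast0 add.commute)
qed

lemma rinner_commute: "rinner N a b = rinner N b a"
  unfolding rinner_def by (simp add: mult.commute)

lemma rinner_self_eq_rnorm: "rinner N u u = (rnorm N u)\<^sup>2"
  unfolding rinner_def rnorm_def by (simp add: sum_nonneg power2_eq_square)

lemma rnorm_nonneg: "0 \<le> rnorm N u"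
  unfolding rnorm_def by (simp add: sum_nonneg)

lemma abs_le_rnorm: "k < N \<Longrightarrow> \<bar>w k\<bar> \<le> rnorm N w"
  unfolding rnorm_def
  by (metis real_sqrt_abs real_sqrt_le_mono member_le_sum finite_lessThan lessThan_iff zero_le_power2)

lemma rnorm_scale: "rnorm N (\<lambda>k. s * w k) = \<bar>s\<bar> * rnorm N w"
  unfolding rnorm_def by (simp add: power_mult_distrib sum_distrib_left[symmetric] real_sqrt_mult)

lemma rnorm_cong_abs:
  assumes "\<And>k. k < N \<Longrightarrow> \<bar>a k\<bar> = \<bar>b k\<bar>"
  shows "rnorm N a = rnorm N b"
proof -
  have "(a k)\<^sup>2 = (b k)\<^sup>2" if "k < N" for k
    using assms[OF that] by (metis power2_abs)
  then show ?thesis unfolding rnorm_def by simp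
qed

lemma rinner_fun_upd:
  "k < N \<Longrightarrow> rinner N w (u(k := t)) = rinner N w u + w k * (t - u k)"
  unfolding rinner_def by (simp add: sum.remove[of _ k] algebra_simps)

lemma rinner_cong_right: "(\<And>k. k < N \<Longrightarrow> a k = b k) \<Longrightarrow> rinner N z a = rinner N z b"
  unfolding rinner_def by simp

lemma rinner_add_right: "rinner N z (\<lambda>k. a k + b k) = rinner N z a + rinner N z b"
  unfolding rinner_def by (simp add: distrib_left sum.distrib)

lemma rinner_scale_right: "rinner N z (\<lambda>k. s * a k) = s * rinner N z a"
  unfolding rinner_def by (simp add: sum_distrib_left mult_ac)

lemma rinner_sum_right: "rinner N z (\<lambda>k. \<Sum>i\<in>I. h i k) = (\<Sum>i\<in>I. rinner N z (h i))"
  unfolding rinner_def by (simp add: sum_distrib_left sum.swap[of _ I])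

lemma rinner_diff_right: "rinner N z (\<lambda>k. a k - b k) = rinner N z a - rinner N z b"
  unfolding rinner_def by (simp add: right_diff_distrib sum_subtractf)

lemma rinner_imul_imul: "rinner (2 * n) (imul n a) (imul n b) = rinner (2 * n) a b"
  unfolding rinner_def imul_def sum_lessThan_double[of _ n] by simp

lemma rinner_imul_right: "rinner (2 * n) a (imul n b) = - rinner (2 * n) (imul n a) b"
  unfolding rinner_def imul_def sum_lessThan_double[of _ n] by (simp add: sum_negf)

lemma rinner_imul_self: "rinner (2 * n) (imul n a) a = 0"
  unfolding rinner_def imul_def sum_lessThan_double[of _ n] by (simp add: sum_negf mult.commute)

lemma rnorm_imul: "rnorm (2 * n) (imul n u) = rnorm (2 * n) u"
  using rinner_imul_imul[of n u u] rnorm_nonneg by (simp add: rinner_self_eq_rnorm power2_eq_iff_nonneg)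

lemma Re_cinner_ofplus: "Re (cinner n b (ofplus n u)) = rinner (2 * n) (vplus n b) u"
  unfolding rinner_def cinner_def ofplus_def vplus_def sum_lessThan_double[of _ n] Re_sum
  by (simp add: sum.distrib)

lemma Im_cinner_ofplus: "Im (cinner n b (ofplus n u)) = rinner (2 * n) (vplus n b) (imul n u)"
  unfolding rinner_def cinner_def ofplus_def vplus_def imul_def sum_lessThan_double[of _ n] Im_sum
  by (simp add: sum_subtractf sum_negf)

lemma cmod_cinner_ofplus:
  "(cmod (cinner n b (ofplus n u)))\<^sup>2
     = (rinner (2 * n) (vplus n b) u)\<^sup>2 + (rinner (2 * n) (imul n (vplus n b)) u)\<^sup>2"
  by (simp add: cmod_power2 Re_cinner_ofplus Im_cinner_ofplus rinner_imul_right)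

lemma cinner_commute: "cinner n a b = cnj (cinner n b a)"
  unfolding cinner_def cnj_sum by (simp add: mult.commute)

lemma cinner_ofplus_vplus: "cinner n b (ofplus n (vplus n y)) = cinner n b y"
  unfolding cinner_def ofplus_def vplus_def by (intro sum.cong) (auto simp: complex_eq_iff)

lemma cnorm_ofplus: "cnorm n (ofplus n u) = rnorm (2 * n) u"
  unfolding cnorm_def rnorm_def ofplus_def sum_lessThan_double[of _ n] cmod_power2
  by (simp add: sum.distrib)

lemma cnorm_eq_rnorm_vplus: "cnorm n y = rnorm (2 * n) (vplus n y)"
  unfolding cnorm_def rnorm_def vplus_def sum_lessThan_double[of _ n]
  by (simp add: cmod_power2 sum.distrib)

lemma cnorm_pos:
  assumes "j < n" and "x j \<noteq> 0"
  shows "0 < cnorm n x"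
proof -
  have "0 < (cmod (x j))\<^sup>2" using assms(2) by simp
  also have "\<dots> \<le> (\<Sum>i<n. (cmod (x i))\<^sup>2)" using assms(1) by (intro member_le_sum) auto
  finally show ?thesis unfolding cnorm_def by simp
qed

lemma has_real_derivative_rinner_fun_upd:
  assumes "k < N"
  shows "((\<lambda>t. rinner N w (u(k := t))) has_real_derivative w k) (at t0)"
proof -
  have upd: "(\<lambda>t. rinner N w (u(k := t))) = (\<lambda>t. rinner N w u + w k * (t - u k))"
    using assms by (simp add: rinner_fun_upd)
  show ?thesis unfolding upd by (auto intro!: derivative_eq_intros)
qed

lemma has_real_derivative_rinner_self_fun_upd:
  assumes "k < N"
  shows "((\<lambda>t. rinner N (u(k := t)) (u(k := t))) has_real_derivative 2 * t0) (at t0)"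
proof -
  have upd: "(\<lambda>t. rinner N (u(k := t)) (u(k := t))) = (\<lambda>t. rinner N u u - u k * u k + t * t)"
    using assms unfolding rinner_def by (simp add: sum.remove[of _ k] algebra_simps)
  show ?thesis unfolding upd by (auto intro!: derivative_eq_intros)
qed

lemma f_obj_eq:
  "f_obj n m a xn u = (\<Sum>i<m. ((rinner (2 * n) (vplus n (a i)) u)\<^sup>2
      + (rinner (2 * n) (imul n (vplus n (a i))) u)\<^sup>2 - (cmod (cinner n (a i) xn))\<^sup>2)\<^sup>2)"
  unfolding f_obj_def cmod_cinner_ofplus ..

lemma g_obj_eq:
  assumes "v = vplus n xn"
  shows "g_obj n c xn u = 8 * c * ((rinner (2 * n) u u)\<^sup>2 + (rinner (2 * n) v v)\<^sup>2
      - ((rinner (2 * n) v u)\<^sup>2 + (rinner (2 * n) (imul n v) u)\<^sup>2) - rinner (2 * n) u u * rinner (2 * n) v v)"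
  unfolding g_obj_def assms cinner_commute[of n "ofplus n u"] complex_mod_cnj cmod_cinner_ofplus
    cnorm_ofplus cnorm_eq_rnorm_vplus[of n xn] rinner_self_eq_rnorm
  by simp

lemma grad_f_obj:
  assumes "k < 2 * n"
  shows "grad (f_obj n m a xn) u k = (\<Sum>i<m.
    4 * ((rinner (2 * n) (vplus n (a i)) u)\<^sup>2 + (rinner (2 * n) (imul n (vplus n (a i))) u)\<^sup>2
          - (cmod (cinner n (a i) xn))\<^sup>2)
      * (rinner (2 * n) (vplus n (a i)) u * vplus n (a i) k
          + rinner (2 * n) (imul n (vplus n (a i))) u * imul n (vplus n (a i)) k))"
  unfolding grad_def f_obj_eq
  using assms
  by (intro DERIV_imp_deriv)
     (auto intro!: derivative_eq_intros has_real_derivative_rinner_fun_upd sum.cong simp: algebra_simps)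

lemma grad_g_obj:
  assumes "k < 2 * n" and "v = vplus n xn"
  shows "grad (g_obj n c xn) u k = 16 * c * (2 * rinner (2 * n) u u * u k - rinner (2 * n) v v * u k
      - rinner (2 * n) v u * v k - rinner (2 * n) (imul n v) u * imul n v k)"
  unfolding grad_def g_obj_eq[OF assms(2)]
  using assms(1)
  by (intro DERIV_imp_deriv)
     (auto intro!: derivative_eq_intros has_real_derivative_rinner_fun_upd
        has_real_derivative_rinner_self_fun_upd simp: algebra_simps)

lemma tens_apply_diff:
  "tens_apply N (\<lambda>i1 i2 i3 i4. R1 i1 i2 i3 i4 - R2 i1 i2 i3 i4) a b c d
     = tens_apply N R1 a b c d - tens_apply N R2 a b c d"
  unfolding tens_apply_def by (simp add: sum_subtractf left_diff_distrib)

lemma sum_product4: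
  "sum f1 A * sum f2 A * sum f3 A * sum f4 A
     = (\<Sum>i1\<in>A. \<Sum>i2\<in>A. \<Sum>i3\<in>A. \<Sum>i4\<in>A. f1 i1 * f2 i2 * f3 i3 * (f4 i4 :: real))"
proof -
  have "(\<Sum>i1\<in>A. \<Sum>i2\<in>A. \<Sum>i3\<in>A. \<Sum>i4\<in>A. f1 i1 * f2 i2 * f3 i3 * f4 i4)
     = (\<Sum>i1\<in>A. f1 i1 * (\<Sum>i2\<in>A. f2 i2 * (\<Sum>i3\<in>A. f3 i3 * (\<Sum>i4\<in>A. f4 i4))))"
    by (simp add: sum_distrib_left mult.assoc)
  also have "\<dots> = sum f1 A * (sum f2 A * (sum f3 A * sum f4 A))"
    by (simp only: sum_distrib_right[symmetric])
  finally show ?thesis by (simp add: mult.assoc)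
qed

lemma tens_apply_sum_rank_one:
  "tens_apply N (\<lambda>i1 i2 i3 i4. s * (\<Sum>i<m. p i i1 * p i i2 * p i i3 * p i i4)) w1 w2 w3 w4
     = s * (\<Sum>i<m. rinner N (p i) w1 * rinner N (p i) w2 * rinner N (p i) w3 * rinner N (p i) w4)"
proof -
  have "tens_apply N (\<lambda>i1 i2 i3 i4. s * (\<Sum>i<m. p i i1 * p i i2 * p i i3 * p i i4)) w1 w2 w3 w4
      = (\<Sum>i1<N. \<Sum>i2<N. \<Sum>i3<N. \<Sum>i4<N. \<Sum>i<m.
           s * (p i i1 * w1 i1 * (p i i2 * w2 i2) * (p i i3 * w3 i3) * (p i i4 * w4 i4)))"
    unfolding tens_apply_def by (simp add: sum_distrib_left sum_distrib_right mult_ac)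
  also have "\<dots> = (\<Sum>i<m. \<Sum>i1<N. \<Sum>i2<N. \<Sum>i3<N. \<Sum>i4<N.
           s * (p i i1 * w1 i1 * (p i i2 * w2 i2) * (p i i3 * w3 i3) * (p i i4 * w4 i4)))"
    by (simp only: sum.swap[of _ "{..<N}" "{..<m}"])
  also have "\<dots> = s * (\<Sum>i<m. rinner N (p i) w1 * rinner N (p i) w2 * rinner N (p i) w3 * rinner N (p i) w4)"
    unfolding rinner_def sum_product4 by (simp only: sum_distrib_left)
  finally show ?thesis .
qed

lemma if_zero_mult: "(if P then x else 0) * (y::real) = (if P then x * y else 0)"
  by simp

lemma if_conj_zero: "(if P \<and> Q then x else 0) = (if P then if Q then x else (0::real) else 0)"
  by simp

lemma sum_if_const: "(\<Sum>i\<in>A. if P then f i else 0) = (if P then sum f A else (0::real))"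
  by simp

lemma tens_apply_tensS:
  "tens_apply N tensS a b c d
     = rinner N a b * rinner N c d + rinner N a c * rinner N b d + rinner N a d * rinner N b c"
  unfolding tens_apply_def tensS_def rinner_def
  by (simp only: distrib_right sum.distrib if_zero_mult mult_1 if_conj_zero sum_if_const)
     (simp add: sum_product mult_ac)

lemma tens_apply_scale_left: "tens_apply N R (\<lambda>k. s * a k) b c d = s * tens_apply N R a b c d"
  unfolding tens_apply_def by (simp add: sum_distrib_left mult_ac)

lemma abs_tens_apply_le_coeffs:
  "\<bar>tens_apply N R a b c d\<bar>
     \<le> (\<Sum>i1<N. \<Sum>i2<N. \<Sum>i3<N. \<Sum>i4<N. \<bar>R i1 i2 i3 i4\<bar>) * (rnorm N a * rnorm N b * rnorm N c * rnorm N d)"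
proof -
  have "\<bar>a i1 * b i2 * c i3 * d i4\<bar> \<le> rnorm N a * rnorm N b * rnorm N c * rnorm N d"
    if "i1 < N" "i2 < N" "i3 < N" "i4 < N" for i1 i2 i3 i4
    unfolding abs_mult using that by (intro mult_mono abs_le_rnorm) (auto simp: rnorm_nonneg)
  then have "\<bar>R i1 i2 i3 i4 * a i1 * b i2 * c i3 * d i4\<bar>
      \<le> \<bar>R i1 i2 i3 i4\<bar> * (rnorm N a * rnorm N b * rnorm N c * rnorm N d)"
    if "i1 < N" "i2 < N" "i3 < N" "i4 < N" for i1 i2 i3 i4
    using that by (simp add: abs_mult mult.assoc mult_left_mono)
  then show ?thesis
    unfolding tens_apply_def sum_distrib_right
    by (intro order.trans[OF sum_abs sum_mono]) auto
qed

lemma abs_tens_apply_le_opnorm: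
  "\<bar>tens_apply N R a b c d\<bar> \<le> tens_opnorm N R * (rnorm N a * rnorm N b * rnorm N c * rnorm N d)"
proof -
  define p where "p = rnorm N a * rnorm N b * rnorm N c * rnorm N d"
  define vals where "vals = {tens_apply N R u1 u2 u3 u4 | u1 u2 u3 u4.
      rnorm N u1 * rnorm N u2 * rnorm N u3 * rnorm N u4 = 1}"
  have bdd: "bdd_above vals"
  proof (rule bdd_aboveI)
    fix t assume "t \<in> vals"
    then obtain u1 u2 u3 u4 where "t = tens_apply N R u1 u2 u3 u4"
      and "rnorm N u1 * rnorm N u2 * rnorm N u3 * rnorm N u4 = 1"
      unfolding vals_def by blast
    then show "t \<le> (\<Sum>i1<N. \<Sum>i2<N. \<Sum>i3<N. \<Sum>i4<N. \<bar>R i1 i2 i3 i4\<bar>)"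
      using abs_tens_apply_le_coeffs[of N R u1 u2 u3 u4] by simp
  qed
  show ?thesis
  proof (cases "p = 0")
    case True
    then show ?thesis using abs_tens_apply_le_coeffs[of N R a b c d] by (simp add: p_def[symmetric])
  next
    case False
    moreover have "0 \<le> p" by (simp add: p_def rnorm_nonneg)
    ultimately have "0 < p" by simp
    have "s * tens_apply N R a b c d \<le> tens_opnorm N R" if "\<bar>s\<bar> = 1 / p" for s
    proof -
      have "rnorm N (\<lambda>k. s * a k) * rnorm N b * rnorm N c * rnorm N d = (1 / p) * p"
        unfolding rnorm_scale that p_def by (simp add: mult.assoc)
      then have "rnorm N (\<lambda>k. s * a k) * rnorm N b * rnorm N c * rnorm N d = 1"
        using \<open>0 < p\<close> by simp
      then have "tens_apply N R (\<lambda>k. s * a k) b c d \<in> vals" unfolding vals_def by blast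
      then show ?thesis
        unfolding tens_opnorm_def vals_def[symmetric] tens_apply_scale_left using bdd by (rule cSup_upper)
    qed
    from this[of "1 / p"] this[of "- 1 / p"] \<open>0 < p\<close>
    have "\<bar>tens_apply N R a b c d\<bar> \<le> tens_opnorm N R * p"
      by (simp add: abs_le_iff field_simps)
    then show ?thesis by (simp only: p_def)
  qed
qed

definition tens_hermdiff ::
    "nat \<Rightarrow> tensor4 \<Rightarrow> (nat \<Rightarrow> real) \<Rightarrow> (nat \<Rightarrow> real) \<Rightarrow> (nat \<Rightarrow> real) \<Rightarrow> (nat \<Rightarrow> real) \<Rightarrow> real" where
  "tens_hermdiff n R u v w z =
     tens_apply (2 * n) R u u w z + tens_apply (2 * n) R (imul n u) (imul n u) w z
   - tens_apply (2 * n) R v v w z - tens_apply (2 * n) R (imul n v) (imul n v) w z"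

definition tens_grad :: "nat \<Rightarrow> tensor4 \<Rightarrow> (nat \<Rightarrow> real) \<Rightarrow> (nat \<Rightarrow> real) \<Rightarrow> (nat \<Rightarrow> real) \<Rightarrow> real" where
  "tens_grad n R u v z = tens_hermdiff n R u v u z + tens_hermdiff n R u v (imul n u) (imul n z)"

lemma tens_grad_diff:
  "tens_grad n (\<lambda>i1 i2 i3 i4. R1 i1 i2 i3 i4 - R2 i1 i2 i3 i4) u v z = tens_grad n R1 u v z - tens_grad n R2 u v z"
  unfolding tens_grad_def tens_hermdiff_def tens_apply_diff by simp

lemma abs_tens_hermdiff_le:
  "\<bar>tens_hermdiff n R u v w z\<bar>
     \<le> 2 * tens_opnorm (2 * n) R * rnorm (2 * n) w * rnorm (2 * n) z * ((rnorm (2 * n) u)\<^sup>2 + (rnorm (2 * n) v)\<^sup>2)"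
proof -
  have bound: "\<bar>tens_apply (2 * n) R p p w z\<bar>
      \<le> tens_opnorm (2 * n) R * rnorm (2 * n) w * rnorm (2 * n) z * (rnorm (2 * n) p)\<^sup>2" for p
    using abs_tens_apply_le_opnorm[of "2 * n" R p p w z] by (simp add: power2_eq_square mult_ac)
  show ?thesis
    using bound[of u] bound[of "imul n u"] bound[of v] bound[of "imul n v"]
    unfolding tens_hermdiff_def rnorm_imul by (simp add: algebra_simps)
qed

lemma abs_tens_grad_le:
  "\<bar>tens_grad n R u v z\<bar>
     \<le> 4 * tens_opnorm (2 * n) R * rnorm (2 * n) u * rnorm (2 * n) z * ((rnorm (2 * n) u)\<^sup>2 + (rnorm (2 * n) v)\<^sup>2)"
  using abs_tens_hermdiff_le[of n R u v u z] abs_tens_hermdiff_le[of n R u v "imul n u" "imul n z"]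
  unfolding tens_grad_def rnorm_imul by (simp add: algebra_simps)

lemma tens_grad_sum_rank_one:
  "tens_grad n (\<lambda>i1 i2 i3 i4. s * (\<Sum>i<m. p i i1 * p i i2 * p i i3 * p i i4)) u v z
     = s * (\<Sum>i<m. ((rinner (2 * n) (p i) u)\<^sup>2 + (rinner (2 * n) (p i) (imul n u))\<^sup>2
                     - (rinner (2 * n) (p i) v)\<^sup>2 - (rinner (2 * n) (p i) (imul n v))\<^sup>2)
                  * (rinner (2 * n) (p i) u * rinner (2 * n) (p i) z
                     + rinner (2 * n) (p i) (imul n u) * rinner (2 * n) (p i) (imul n z)))"
  unfolding tens_grad_def tens_hermdiff_def tens_apply_sum_rank_one
  by (simp add: algebra_simps power2_eq_square sum.distrib sum_subtractf sum_distrib_left)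

lemma rinner_grad_f_obj:
  assumes "c \<noteq> 0"
  shows "rinner (2 * n) z (grad (f_obj n m a xn) u) = 4 * c * tens_grad n (tensT n m c a) u (vplus n xn) z"
proof -
  define P where "P i = vplus n (a i)" for i
  define v where "v = vplus n xn"
  define F where "F i = (rinner (2 * n) (P i) u)\<^sup>2 + (rinner (2 * n) (imul n (P i)) u)\<^sup>2
      - ((rinner (2 * n) (P i) v)\<^sup>2 + (rinner (2 * n) (imul n (P i)) v)\<^sup>2)" for i
  have y: "(cmod (cinner n (a i) xn))\<^sup>2 = (rinner (2 * n) (P i) v)\<^sup>2 + (rinner (2 * n) (imul n (P i)) v)\<^sup>2" for i
    unfolding P_def v_def by (metis cinner_ofplus_vplus cmod_cinner_ofplus)
  have "rinner (2 * n) z (grad (f_obj n m a xn) u)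
      = rinner (2 * n) z (\<lambda>k. \<Sum>i<m. 4 * F i * rinner (2 * n) (P i) u * P i k
                                  + 4 * F i * rinner (2 * n) (imul n (P i)) u * imul n (P i) k)"
    by (intro rinner_cong_right) (simp add: grad_f_obj y F_def P_def algebra_simps)
  also have "\<dots> = (\<Sum>i<m. 4 * F i * (rinner (2 * n) (P i) u * rinner (2 * n) (P i) z
                     + rinner (2 * n) (P i) (imul n u) * rinner (2 * n) (P i) (imul n z)))"
    by (simp only: rinner_sum_right rinner_add_right rinner_scale_right rinner_imul_right[of _ "P _"])
       (simp add: rinner_commute[of _ z] algebra_simps)
  also have "\<dots> = 4 * c * tens_grad n (tensT n m c a) u v z"
    unfolding tensT_def[abs_def] tens_grad_sum_rank_one P_def[symmetric] rinner_imul_right[of _ "P _"]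
    using assms by (simp add: F_def sum_distrib_left algebra_simps)
  finally show ?thesis unfolding v_def .
qed

lemma rinner_grad_g_obj:
  "rinner (2 * n) z (grad (g_obj n c xn) u) = 4 * c * tens_grad n tensS u (vplus n xn) z"
proof -
  define v where "v = vplus n xn"
  have "rinner (2 * n) z (grad (g_obj n c xn) u)
      = rinner (2 * n) z (\<lambda>k. (16 * c * (2 * rinner (2 * n) u u - rinner (2 * n) v v)) * u k
          + ((- 16 * c * rinner (2 * n) v u) * v k + (- 16 * c * rinner (2 * n) (imul n v) u) * imul n v k))"
    by (intro rinner_cong_right) (simp add: grad_g_obj v_def algebra_simps)
  also have "\<dots> = 16 * c * (2 * rinner (2 * n) u u - rinner (2 * n) v v) * rinner (2 * n) z u
      - 16 * c * rinner (2 * n) v u * rinner (2 * n) z v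
      - 16 * c * rinner (2 * n) (imul n v) u * rinner (2 * n) z (imul n v)"
    unfolding rinner_add_right rinner_scale_right by (simp add: algebra_simps)
  also have "\<dots> = 4 * c * tens_grad n tensS u v z"
    unfolding tens_grad_def tens_hermdiff_def tens_apply_tensS
    by (simp only: rinner_imul_imul)
       (simp only: rinner_imul_self rinner_commute[of _ u "imul n u"] rinner_imul_right[of _ v],
        simp add: rinner_commute algebra_simps)
  finally show ?thesis unfolding v_def .
qed

lemma rnorm_grad_f_obj_minus_grad_g_obj_le:
  assumes "0 < c" and "0 \<le> \<delta>"
    and "tens_opnorm (2 * n) (\<lambda>i1 i2 i3 i4. tensT n m c a i1 i2 i3 i4 - tensS i1 i2 i3 i4) \<le> \<delta>"
  shows "rnorm (2 * n) (\<lambda>k. grad (f_obj n m a xn) u k - grad (g_obj n c xn) u k)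
           \<le> 16 * c * \<delta> * (rnorm (2 * n) u + rnorm (2 * n) (vplus n xn)) ^ 3"
proof -
  have "c \<noteq> 0" using assms(1) by simp
  define w where "w k = grad (f_obj n m a xn) u k - grad (g_obj n c xn) u k" for k
  define r where "r = rnorm (2 * n) u"
  define s where "s = rnorm (2 * n) (vplus n xn)"
  have "0 \<le> r" "0 \<le> s" "0 \<le> rnorm (2 * n) w"
    unfolding r_def s_def by (simp_all add: rnorm_nonneg)
  have "(rnorm (2 * n) w)\<^sup>2 = rinner (2 * n) w w"
    by (simp only: rinner_self_eq_rnorm)
  also have "\<dots> = rinner (2 * n) w (grad (f_obj n m a xn) u) - rinner (2 * n) w (grad (g_obj n c xn) u)"
    unfolding rinner_diff_right[symmetric] by (simp only: w_def[abs_def])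
  also have "\<dots> = 4 * c * tens_grad n (\<lambda>i1 i2 i3 i4. tensT n m c a i1 i2 i3 i4 - tensS i1 i2 i3 i4) u (vplus n xn) w"
    by (simp only: rinner_grad_f_obj[OF \<open>c \<noteq> 0\<close>] rinner_grad_g_obj tens_grad_diff right_diff_distrib)
  also have "\<dots> \<le> 4 * c * (4 * \<delta> * r * rnorm (2 * n) w * (r\<^sup>2 + s\<^sup>2))"
  proof -
    let ?D = "\<lambda>i1 i2 i3 i4. tensT n m c a i1 i2 i3 i4 - tensS i1 i2 i3 i4"
    have "tens_grad n ?D u (vplus n xn) w \<le> 4 * tens_opnorm (2 * n) ?D * r * rnorm (2 * n) w * (r\<^sup>2 + s\<^sup>2)"
      using abs_tens_grad_le[of n ?D u "vplus n xn" w] unfolding r_def s_def by linarith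
    also have "\<dots> \<le> 4 * \<delta> * r * rnorm (2 * n) w * (r\<^sup>2 + s\<^sup>2)"
      using assms(3) \<open>0 \<le> r\<close> \<open>0 \<le> rnorm (2 * n) w\<close> by (intro mult_right_mono) auto
    finally show ?thesis using \<open>0 < c\<close> by simp
  qed
  also have "\<dots> \<le> (16 * c * \<delta> * (r + s) ^ 3) * rnorm (2 * n) w"
  proof -
    have "r * (r\<^sup>2 + s\<^sup>2) \<le> (r + s) ^ 3"
      using \<open>0 \<le> r\<close> \<open>0 \<le> s\<close> by (simp add: power2_eq_square power3_eq_cube algebra_simps)
    then have "r * (r\<^sup>2 + s\<^sup>2) * (16 * c * \<delta> * rnorm (2 * n) w)
        \<le> (r + s) ^ 3 * (16 * c * \<delta> * rnorm (2 * n) w)"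
      using assms \<open>0 \<le> rnorm (2 * n) w\<close> by (intro mult_right_mono) auto
    then show ?thesis by (simp add: mult_ac)
  qed
  finally have "(rnorm (2 * n) w)\<^sup>2 \<le> (16 * c * \<delta> * (r + s) ^ 3) * rnorm (2 * n) w" .
  moreover have "0 \<le> 16 * c * \<delta> * (r + s) ^ 3"
    using assms \<open>0 \<le> r\<close> \<open>0 \<le> s\<close> by simp
  ultimately have "rnorm (2 * n) w \<le> 16 * c * \<delta> * (r + s) ^ 3"
    using \<open>0 \<le> rnorm (2 * n) w\<close>
    by (cases "rnorm (2 * n) w = 0") (auto simp: power2_eq_square intro: mult_right_le_imp_le)
  then show ?thesis unfolding w_def[abs_def] r_def s_def .
qed

lemma rnorm_grad_g_obj_le_at_critical_point:
  assumes "0 < c" and "0 \<le> \<delta>"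
    and "tens_opnorm (2 * n) (\<lambda>i1 i2 i3 i4. tensT n m c a i1 i2 i3 i4 - tensS i1 i2 i3 i4) \<le> \<delta>"
    and "\<And>k. k < 2 * n \<Longrightarrow> grad (f_obj n m a xn) u k = 0"
  shows "rnorm (2 * n) (grad (g_obj n c xn) u) \<le> 16 * c * \<delta> * (rnorm (2 * n) u + rnorm (2 * n) (vplus n xn)) ^ 3"
proof -
  have "rnorm (2 * n) (grad (g_obj n c xn) u)
      = rnorm (2 * n) (\<lambda>k. grad (f_obj n m a xn) u k - grad (g_obj n c xn) u k)"
    using assms(4) by (intro rnorm_cong_abs) simp
  then show ?thesis using rnorm_grad_f_obj_minus_grad_g_obj_le[OF assms(1-3)] by simp
qed

theorem proposition3:
  "\<exists>C1 > (0::real). \<forall>(n::nat) (m::nat) (a :: nat \<Rightarrow> nat \<Rightarrow> complex) (xn :: nat \<Rightarrow> complex)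
      (\<sigma>::real) (\<delta>0::real) (x :: nat \<Rightarrow> complex).
    1 \<le> n \<longrightarrow> 1 \<le> m \<longrightarrow> (\<exists>j<n. xn j \<noteq> 0) \<longrightarrow> \<sigma> > 0 \<longrightarrow> \<delta>0 > 0 \<longrightarrow>
    tens_opnorm (2 * n) (\<lambda>i1 i2 i3 i4. tensT n m (real m * \<sigma> ^ 4) a i1 i2 i3 i4 - tensS i1 i2 i3 i4) < \<delta>0 \<longrightarrow>
    rnorm (2 * n) (grad (g_obj n (real m * \<sigma> ^ 4) xn) (vplus n x))
      \<ge> C1 * \<delta>0 * (real m * \<sigma> ^ 4) * (cnorm n x + cnorm n xn) ^ 3 \<longrightarrow>
    (\<exists>k < 2 * n. grad (f_obj n m a xn) (vplus n x) k \<noteq> 0)"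
proof (rule exI[of _ 17], intro conjI allI impI)
  fix n m :: nat and a :: "nat \<Rightarrow> nat \<Rightarrow> complex" and xn x :: "nat \<Rightarrow> complex" and \<sigma> \<delta>0 :: real
  assume "1 \<le> n" and "1 \<le> m" and "\<exists>j<n. xn j \<noteq> 0" and "\<sigma> > 0" and "\<delta>0 > 0"
    and opnorm_small: "tens_opnorm (2 * n) (\<lambda>i1 i2 i3 i4. tensT n m (real m * \<sigma> ^ 4) a i1 i2 i3 i4 - tensS i1 i2 i3 i4) < \<delta>0"
    and grad_g_large: "rnorm (2 * n) (grad (g_obj n (real m * \<sigma> ^ 4) xn) (vplus n x))
      \<ge> 17 * \<delta>0 * (real m * \<sigma> ^ 4) * (cnorm n x + cnorm n xn) ^ 3"
  define c where "c = real m * \<sigma> ^ 4"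
  define R where "R = cnorm n x + cnorm n xn"
  have "0 < c" unfolding c_def using \<open>1 \<le> m\<close> \<open>\<sigma> > 0\<close> by simp
  have "0 < R"
    using \<open>\<exists>j<n. xn j \<noteq> 0\<close> cnorm_pos[of _ n xn] rnorm_nonneg[of "2 * n" "vplus n x"]
    unfolding R_def cnorm_eq_rnorm_vplus by fastforce
  show "\<exists>k<2 * n. grad (f_obj n m a xn) (vplus n x) k \<noteq> 0"
  proof (rule ccontr)
    assume "\<not> ?thesis"
    then have "rnorm (2 * n) (grad (g_obj n c xn) (vplus n x)) \<le> 16 * c * \<delta>0 * R ^ 3"
      using rnorm_grad_g_obj_le_at_critical_point[of c \<delta>0 n m a xn "vplus n x"] opnorm_small \<open>0 < c\<close> \<open>\<delta>0 > 0\<close>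
      unfolding R_def c_def cnorm_eq_rnorm_vplus by auto
    moreover have "16 * c * \<delta>0 * R ^ 3 < 17 * \<delta>0 * c * R ^ 3"
      using \<open>0 < c\<close> \<open>\<delta>0 > 0\<close> \<open>0 < R\<close> by simp
    ultimately show False using grad_g_large unfolding c_def R_def by simp
  qed
qed simp

end
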